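(* Let $F_X$ and $F_Y$ be continuous cdfs and for each $n$ let $X_1,\dots,X_n$ be an i.i.d. sample from $F_X$ and $Y_1,\dots,Y_n$ an i.i.d. sample from $F_Y$, the two samples independent. Let $(\gamma_n)$ be $[0,1]$-valued with $|\gamma_n-\gamma|=O(1/n)$ for some $\gamma\in[0,1]$, and write $k_n=1+[(n-1)\gamma_n]$. If $\operatorname{dist}(\gamma,A_0)>0$ then $\liminf_{n\to\infty}P(X_{k_n:n}\le Y_{k_n:n})\ge 1/2$ (i.e. $X_{k_n:n}\le_{\textnormal{asp}}Y_{k_n:n}$). If $\operatorname{dist}(\gamma,A_2)>0$ then $\lim_{n\to\infty}P(X_{k_n:n}\le Y_{k_n:n})=1/2$ (i.e. $X_{k_n:n}=_{\textnormal{asp}}Y_{k_n:n}$).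
   Context: $F^{-1}(u)=\inf\{x:F(x)\ge u\}$. $A_0=\{u\in(0,1):F_X^{-1}(u)>F_Y^{-1}(u)\}$, $A_2=\{u\in(0,1):F_X^{-1}(u)\neq F_Y^{-1}(u)\}$. $\operatorname{dist}(x,A)=\inf\{|x-y|:y\in A\}$ (with $\inf\emptyset=+\infty$). $X_{k:n}$ denotes the $k$-th smallest among $X_1,\dots,X_n$; $[x]$ is the integer part. *)

theory Defs
  imports "HOL-Probability.Probability" "HOL-Library.Landau_Symbols"
begin

definition quantile :: "(real \<Rightarrow> real) \<Rightarrow> real \<Rightarrow> real" where
  "quantile F u = Inf {x. u \<le> F x}"

text \<open>k-th smallest (1-indexed) among x 0, ..., x (n-1).\<close>
definition order_stat :: "(nat \<Rightarrow> real) \<Rightarrow> nat \<Rightarrow> nat \<Rightarrow> real" where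
  "order_stat x n k = sort (map x [0..<n]) ! (k - 1)"

definition A0 :: "(real \<Rightarrow> real) \<Rightarrow> (real \<Rightarrow> real) \<Rightarrow> real set" where
  "A0 FX FY = {u \<in> {0<..<1}. quantile FX u > quantile FY u}"

definition A2 :: "(real \<Rightarrow> real) \<Rightarrow> (real \<Rightarrow> real) \<Rightarrow> real set" where
  "A2 FX FY = {u \<in> {0<..<1}. quantile FX u \<noteq> quantile FY u}"

text \<open>dist(x, A) > 0 with the convention inf of empty set = +infinity.\<close>
definition dist_pos :: "real \<Rightarrow> real set \<Rightarrow> bool" where
  "dist_pos x A \<longleftrightarrow> A = {} \<or> infdist x A > 0"

end

theory Submission
  imports Defs
begin

(* The probability integral transform turns the samples into independent uniform samples
   U_i = F_X(X_i) and V_i = F_Y(Y_i). These are exchangeable and almost surely tie-free, so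
   P(U_(k) <= V_(k)) = 1/2 for every k. Since k_n/n -> gamma, Hoeffding's inequality for the
   number of V_i below a level shows that V_(k_n) concentrates at gamma. If F_X^-1 <= F_Y^-1 on a
   neighbourhood of gamma and V_(k_n) lies in it, then Y_(k_n) < X_(k_n) forces
   V_(k_n) <= U_(k_n); hence P(X_(k_n) <= Y_(k_n)) >= 1/2 - o(1). Where the quantile functions
   agree, the same bound for the exchanged samples gives the matching upper bound.
   The rate O(1/n) enters only through gamma_n -> gamma. *)

section \<open>Order statistics\<close>

lemma sorted_nth_le_iff_length_filter:
  fixes s :: "real list"
  assumes "sorted s" "j < length s"
  shows "s ! j \<le> t \<longleftrightarrow> j < length (filter (\<lambda>y. y \<le> t) s)"
  using assms
proof (induction s arbitrary: j)
  case (Cons x s)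
  have x_le: "\<forall>y\<in>set s. x \<le> y" using Cons.prems(1) by simp
  show ?case
  proof (cases "x \<le> t")
    case True
    then show ?thesis using Cons by (cases j) auto
  next
    case False
    then have "filter (\<lambda>y. y \<le> t) s = []" using x_le by (auto simp: filter_empty_conv)
    moreover have "j > 0 \<Longrightarrow> s ! (j - 1) \<in> set s" using Cons.prems(2) by auto
    ultimately show ?thesis using False x_le by (cases j) force+
  qed
qed simp

lemma real_card_Collect_eq_sum:
  fixes n :: nat
  shows "real (card {i. i < n \<and> P i}) = (\<Sum>i<n. if P i then 1 else 0)"
proof -
  have "{i. i < n \<and> P i} = {..<n} \<inter> {i. P i}" by auto
  moreover have "(\<Sum>i<n. if P i then 1 else (0::real)) = real (card ({..<n} \<inter> {i. P i}))"
    using sum.inter_restrict[of "{..<n}" "\<lambda>_. 1::real" "{i. P i}"] by simp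
  ultimately show ?thesis by simp
qed

lemma order_stat_le_iff_card:
  assumes "1 \<le> k" "k \<le> n"
  shows "order_stat x n k \<le> t \<longleftrightarrow> k \<le> card {i. i < n \<and> x i \<le> t}"
proof -
  let ?s = "sort (map x [0..<n])"
  have "order_stat x n k \<le> t \<longleftrightarrow> k - 1 < length (filter (\<lambda>y. y \<le> t) ?s)"
    unfolding order_stat_def using assms by (intro sorted_nth_le_iff_length_filter) auto
  also have "length (filter (\<lambda>y. y \<le> t) ?s) = length (filter (\<lambda>y. y \<le> t) (map x [0..<n]))"
    by (metis mset_filter mset_sort size_mset)
  also have "\<dots> = card {i. i < n \<and> x i \<le> t}"
    unfolding length_filter_conv_card by (rule arg_cong[where f=card]) auto
  finally show ?thesis using assms by linarith
qed

lemma order_stat_mem: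
  assumes "1 \<le> k" "k \<le> n"
  obtains i where "i < n" "order_stat x n k = x i"
proof -
  have "order_stat x n k \<in> set (sort (map x [0..<n]))"
    unfolding order_stat_def using assms by (intro nth_mem) auto
  then show ?thesis using that by auto
qed

lemma order_stat_cong [cong]:
  "n = m \<Longrightarrow> k = l \<Longrightarrow> (\<And>i. i < m =simp=> x i = y i) \<Longrightarrow> order_stat x n k = order_stat y m l"
  unfolding order_stat_def simp_implies_def
  by (metis (mono_tags) atLeastLessThan_iff map_eq_conv set_upt)

lemma order_stat_mono_comp:
  assumes "mono f" "1 \<le> k" "k \<le> n"
  shows "order_stat (\<lambda>i. f (x i)) n k = f (order_stat x n k)"
proof -
  have "sorted (map f (sort (map x [0..<n])))"
    using sorted_wrt_mono_rel[of _ "(\<le>)" "\<lambda>a b. f a \<le> f b"] assms(1)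
    by (simp add: sorted_map monoD)
  moreover have "mset (map f (sort (map x [0..<n]))) = mset (map (\<lambda>i. f (x i)) [0..<n])"
  proof -
    have "map (\<lambda>i. f (x i)) [0..<n] = map f (map x [0..<n])" by simp
    then show ?thesis by (simp only: mset_map mset_sort)
  qed
  ultimately have "sort (map (\<lambda>i. f (x i)) [0..<n]) = map f (sort (map x [0..<n]))"
    by (intro properties_for_sort)
  then show ?thesis unfolding order_stat_def using assms by simp
qed

lemma borel_measurable_card_le:
  fixes f :: "nat \<Rightarrow> 'a \<Rightarrow> real"
  assumes "\<And>i. i < n \<Longrightarrow> f i \<in> borel_measurable N"
  shows "(\<lambda>\<omega>. real (card {i. i < n \<and> f i \<omega> \<le> c})) \<in> borel_measurable N"
  unfolding real_card_Collect_eq_sum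
proof (rule borel_measurable_sum)
  fix i assume "i \<in> {..<n}"
  then have [measurable]: "f i \<in> borel_measurable N" using assms by auto
  show "(\<lambda>\<omega>. if f i \<omega> \<le> c then 1 else (0::real)) \<in> borel_measurable N" by measurable
qed

lemma borel_measurable_order_stat:
  assumes f: "\<And>i. i < n \<Longrightarrow> f i \<in> borel_measurable N" and k: "1 \<le> k" "k \<le> n"
  shows "(\<lambda>\<omega>. order_stat (\<lambda>i. f i \<omega>) n k) \<in> borel_measurable N"
proof (rule borel_measurable_iff_le[THEN iffD2], intro allI)
  fix t
  have [measurable]: "(\<lambda>\<omega>. real (card {i. i < n \<and> f i \<omega> \<le> t})) \<in> borel_measurable N"
    using f by (rule borel_measurable_card_le)
  have "{\<omega> \<in> space N. order_stat (\<lambda>i. f i \<omega>) n k \<le> t} =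
        {\<omega> \<in> space N. real k \<le> real (card {i. i < n \<and> f i \<omega> \<le> t})}"
    by (simp add: order_stat_le_iff_card[OF k])
  also have "\<dots> \<in> sets N" by measurable
  finally show "{\<omega> \<in> space N. order_stat (\<lambda>i. f i \<omega>) n k \<le> t} \<in> sets N" .
qed

section \<open>Independence and exchangeability\<close>

context prob_space
begin

lemma indep_sets_reindex:
  assumes inj: "inj_on f I" and indep: "indep_sets F (f ` I)"
  shows "indep_sets (\<lambda>i. F (f i)) I"
proof (rule indep_setsI)
  fix i assume "i \<in> I"
  then show "F (f i) \<subseteq> events" using indep by (auto simp: indep_sets_def)
next
  fix A J assume J: "J \<noteq> {}" "J \<subseteq> I" "finite J" and A: "\<forall>j\<in>J. A j \<in> F (f j)"
  have inj_J: "inj_on f J" using inj J(2) by (rule inj_on_subset)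
  define B where "B = (\<lambda>x. A (the_inv_into J f x))"
  have B: "B (f j) = A j" if "j \<in> J" for j
    unfolding B_def using the_inv_into_f_f[OF inj_J that] by simp
  have "prob (\<Inter>x\<in>f ` J. B x) = (\<Prod>x\<in>f ` J. prob (B x))"
    by (rule indep_setsD[OF indep]) (use J A B in auto)
  then show "prob (\<Inter>j\<in>J. A j) = (\<Prod>j\<in>J. prob (A j))"
    using B by (simp add: prod.reindex[OF inj_J])
qed

lemma indep_vars_reindex:
  assumes "inj_on f I" "indep_vars M' X (f ` I)"
  shows "indep_vars (\<lambda>i. M' (f i)) (\<lambda>i. X (f i)) I"
  using assms indep_sets_reindex[OF assms(1)] unfolding indep_vars_def by auto

lemma indep_vars_imp_indep_var:
  assumes indep: "indep_vars (\<lambda>_. borel) X I" and "a \<in> I" "b \<in> I" "a \<noteq> b"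
  shows "indep_var borel (X a) borel (X b)"
proof -
  have "indep_var (PiM {a} (\<lambda>_. borel)) (\<lambda>\<omega>. restrict (\<lambda>i. X i \<omega>) {a})
                  (PiM {b} (\<lambda>_. borel)) (\<lambda>\<omega>. restrict (\<lambda>i. X i \<omega>) {b})"
    using assms by (intro indep_var_restrict[OF indep]) auto
  then have "indep_var borel ((\<lambda>f. f a) \<circ> (\<lambda>\<omega>. restrict (\<lambda>i. X i \<omega>) {a}))
                       borel ((\<lambda>f. f b) \<circ> (\<lambda>\<omega>. restrict (\<lambda>i. X i \<omega>) {b}))"
    by (rule indep_var_compose) auto
  then show ?thesis by (simp add: comp_def)
qed

lemma prob_eq_zero_if_indep_atomless:
  fixes A B :: "'a \<Rightarrow> real"
  assumes indep: "indep_var borel A borel B"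
    and atomless: "\<And>x. measure (distr M borel B) {x} = 0"
  shows "prob {\<omega> \<in> space M. A \<omega> = B \<omega>} = 0"
proof -
  have [measurable]: "A \<in> borel_measurable M" "B \<in> borel_measurable M"
    using indep_var_rv1[OF indep] indep_var_rv2[OF indep] .
  let ?DA = "distr M borel A" and ?DB = "distr M borel B"
  let ?diag = "{p :: real \<times> real. fst p = snd p}"
  have diag[measurable]: "?diag \<in> sets (borel \<Otimes>\<^sub>M borel)"
  proof -
    have "?diag = {p \<in> space (borel \<Otimes>\<^sub>M borel). fst p = snd p}" by (simp add: space_pair_measure)
    also have "\<dots> \<in> sets (borel \<Otimes>\<^sub>M borel)" by measurable
    finally show ?thesis .
  qed
  interpret DB: prob_space ?DB by (rule prob_space_distr) simp
  have "emeasure (distr M (borel \<Otimes>\<^sub>M borel) (\<lambda>\<omega>. (A \<omega>, B \<omega>))) ?diag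
      = emeasure (?DA \<Otimes>\<^sub>M ?DB) ?diag"
    using indep unfolding indep_var_distribution_eq by simp
  also have "\<dots> = (\<integral>\<^sup>+x. emeasure ?DB (Pair x -` ?diag) \<partial>?DA)"
    by (rule DB.emeasure_pair_measure_alt) simp
  also have "\<dots> = 0"
  proof -
    have "Pair x -` ?diag = {x}" for x by auto
    then show ?thesis using atomless by (simp add: DB.emeasure_eq_measure)
  qed
  finally have "emeasure M ((\<lambda>\<omega>. (A \<omega>, B \<omega>)) -` ?diag \<inter> space M) = 0"
    by (subst (asm) emeasure_distr) auto
  moreover have "(\<lambda>\<omega>. (A \<omega>, B \<omega>)) -` ?diag \<inter> space M = {\<omega> \<in> space M. A \<omega> = B \<omega>}" by auto
  ultimately show ?thesis by (simp add: measure_def)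
qed

lemma prob_iid_permute:
  assumes indep: "indep_vars (\<lambda>_. borel) Z J" and "J \<noteq> {}"
    and law: "\<And>j. j \<in> J \<Longrightarrow> distr M borel (Z j) = \<mu>"
    and \<sigma>: "bij_betw \<sigma> J J" and A: "A \<in> sets (PiM J (\<lambda>_. borel))"
  shows "prob {\<omega> \<in> space M. (\<lambda>j\<in>J. Z (\<sigma> j) \<omega>) \<in> A} = prob {\<omega> \<in> space M. (\<lambda>j\<in>J. Z j \<omega>) \<in> A}"
proof -
  have joint_law: "prob {\<omega> \<in> space M. (\<lambda>j\<in>J. W j \<omega>) \<in> A} = measure (PiM J (\<lambda>_. \<mu>)) A"
    if indep_W: "indep_vars (\<lambda>_. borel) W J" and law_W: "\<And>j. j \<in> J \<Longrightarrow> distr M borel (W j) = \<mu>"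
    for W
  proof -
    have rv: "\<And>j. j \<in> J \<Longrightarrow> random_variable borel (W j)"
      using indep_W unfolding indep_vars_def by blast
    have "distr M (PiM J (\<lambda>_. borel)) (\<lambda>\<omega>. \<lambda>j\<in>J. W j \<omega>) = PiM J (\<lambda>j. distr M borel (W j))"
      using indep_vars_iff_distr_eq_PiM'[OF \<open>J \<noteq> {}\<close> rv] indep_W by simp
    also have "\<dots> = PiM J (\<lambda>_. \<mu>)" by (rule PiM_cong) (simp_all add: law_W)
    finally have "measure (PiM J (\<lambda>_. \<mu>)) A
        = measure (distr M (PiM J (\<lambda>_. borel)) (\<lambda>\<omega>. \<lambda>j\<in>J. W j \<omega>)) A" by simp
    also have "\<dots> = prob ((\<lambda>\<omega>. \<lambda>j\<in>J. W j \<omega>) -` A \<inter> space M)"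
      by (rule measure_distr[OF measurable_restrict[OF rv] A])
    finally show ?thesis by (simp add: vimage_def Int_def conj_commute)
  qed
  have "indep_vars (\<lambda>_. borel) (\<lambda>j. Z (\<sigma> j)) J"
    using indep_vars_reindex[of \<sigma> J "\<lambda>_. borel" Z] indep \<sigma>
    by (simp add: bij_betw_imp_inj_on bij_betw_imp_surj_on)
  moreover have "distr M borel (Z (\<sigma> j)) = \<mu>" if "j \<in> J" for j
    using law \<sigma> that by (simp add: bij_betwE)
  ultimately show ?thesis using joint_law[of Z] joint_law[of "\<lambda>j. Z (\<sigma> j)"] indep law by simp
qed

lemma prob_le_eq_one_minus_less:
  assumes [measurable]: "f \<in> borel_measurable M" "g \<in> borel_measurable M"
  shows "prob {\<omega> \<in> space M. f \<omega> \<le> (g \<omega> :: real)} = 1 - prob {\<omega> \<in> space M. g \<omega> < f \<omega>}"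
proof -
  have "{\<omega> \<in> space M. f \<omega> \<le> g \<omega>} = space M - {\<omega> \<in> space M. g \<omega> < f \<omega>}" by auto
  then show ?thesis by (simp add: prob_compl)
qed

lemma prob_le_eq_less_if_ties_null:
  assumes [measurable]: "f \<in> borel_measurable M" "g \<in> borel_measurable M"
    and ties: "prob {\<omega> \<in> space M. f \<omega> = g \<omega>} = 0"
  shows "prob {\<omega> \<in> space M. f \<omega> \<le> (g \<omega> :: real)} = prob {\<omega> \<in> space M. f \<omega> < g \<omega>}"
proof (rule antisym)
  have "{\<omega> \<in> space M. f \<omega> \<le> g \<omega>} = {\<omega> \<in> space M. f \<omega> < g \<omega>} \<union> {\<omega> \<in> space M. f \<omega> = g \<omega>}" by auto
  then show "prob {\<omega> \<in> space M. f \<omega> \<le> g \<omega>} \<le> prob {\<omega> \<in> space M. f \<omega> < g \<omega>}"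
    using measure_Un_le[of "{\<omega> \<in> space M. f \<omega> < g \<omega>}" M "{\<omega> \<in> space M. f \<omega> = g \<omega>}"] ties by simp
qed (rule finite_measure_mono; auto)

lemma prob_order_stat_eq_zero:
  fixes X Y :: "nat \<Rightarrow> 'a \<Rightarrow> real"
  assumes indep: "indep_vars (\<lambda>_. borel) (case_sum X Y) ({..<n} <+> {..<n})"
    and atomless: "\<And>i x. i < n \<Longrightarrow> measure (distr M borel (Y i)) {x} = 0"
    and k: "1 \<le> k" "k \<le> n"
  shows "prob {\<omega> \<in> space M. order_stat (\<lambda>i. X i \<omega>) n k = order_stat (\<lambda>i. Y i \<omega>) n k} = 0"
proof (rule prob_eq_0_AE)
  have "AE \<omega> in M. X i \<omega> \<noteq> Y j \<omega>" if "i < n" "j < n" for i j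
  proof -
    have "indep_var borel (case_sum X Y (Inl i)) borel (case_sum X Y (Inr j))"
      by (rule indep_vars_imp_indep_var[OF indep]) (use that in auto)
    then have indep_ij: "indep_var borel (X i) borel (Y j)" by simp
    have [measurable]: "X i \<in> borel_measurable M" "Y j \<in> borel_measurable M"
      using indep_var_rv1[OF indep_ij] indep_var_rv2[OF indep_ij] .
    show ?thesis
      using prob_eq_zero_if_indep_atomless[OF indep_ij atomless[OF \<open>j < n\<close>]]
      by (subst (asm) prob_Collect_eq_0) simp_all
  qed
  then have "AE \<omega> in M. \<forall>i\<in>{..<n}. \<forall>j\<in>{..<n}. X i \<omega> \<noteq> Y j \<omega>"
    by (intro AE_finite_allI) simp_all
  then show "AE \<omega> in M. order_stat (\<lambda>i. X i \<omega>) n k \<noteq> order_stat (\<lambda>i. Y i \<omega>) n k"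
  proof (rule eventually_mono)
    fix \<omega> assume distinct: "\<forall>i\<in>{..<n}. \<forall>j\<in>{..<n}. X i \<omega> \<noteq> Y j \<omega>"
    obtain i where "i < n" "order_stat (\<lambda>i. X i \<omega>) n k = X i \<omega>" by (rule order_stat_mem[OF k])
    moreover obtain j where "j < n" "order_stat (\<lambda>i. Y i \<omega>) n k = Y j \<omega>" by (rule order_stat_mem[OF k])
    ultimately show "order_stat (\<lambda>i. X i \<omega>) n k \<noteq> order_stat (\<lambda>i. Y i \<omega>) n k" using distinct by auto
  qed
qed

lemma prob_order_stat_le_swap:
  fixes U V :: "nat \<Rightarrow> 'a \<Rightarrow> real"
  assumes indep: "indep_vars (\<lambda>_. borel) (case_sum U V) ({..<n} <+> {..<n})"
    and law_U: "\<And>i. i < n \<Longrightarrow> distr M borel (U i) = \<mu>"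
    and law_V: "\<And>i. i < n \<Longrightarrow> distr M borel (V i) = \<mu>"
    and k: "1 \<le> k" "k \<le> n"
  shows "prob {\<omega> \<in> space M. order_stat (\<lambda>i. V i \<omega>) n k \<le> order_stat (\<lambda>i. U i \<omega>) n k}
       = prob {\<omega> \<in> space M. order_stat (\<lambda>i. U i \<omega>) n k \<le> order_stat (\<lambda>i. V i \<omega>) n k}"
proof -
  define J where "J = {..<n} <+> {..<n}"
  define A where "A = {w \<in> space (PiM J (\<lambda>_. borel)).
    order_stat (\<lambda>i. w (Inr i)) n k \<le> order_stat (\<lambda>i. (w (Inl i) :: real)) n k}"
  have [measurable]: "(\<lambda>w. order_stat (\<lambda>i. w (Inl i)) n k) \<in> borel_measurable (PiM J (\<lambda>_. borel))"
    "(\<lambda>w. order_stat (\<lambda>i. w (Inr i)) n k) \<in> borel_measurable (PiM J (\<lambda>_. borel))"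
    by (intro borel_measurable_order_stat[OF _ k] measurable_component_singleton; auto simp: J_def)+
  have "A \<in> sets (PiM J (\<lambda>_. borel))" unfolding A_def by measurable
  moreover have "bij_betw (case_sum Inr Inl) J J"
    by (rule bij_betwI[of _ _ _ "case_sum Inr Inl"]) (auto simp: J_def split: sum.splits)
  moreover have "Inl 0 \<in> J" using k by (auto simp: J_def)
  moreover have "distr M borel (case_sum U V j) = \<mu>" if "j \<in> J" for j
    using that by (auto simp: J_def law_U law_V)
  ultimately have "prob {\<omega> \<in> space M. (\<lambda>j\<in>J. case_sum U V (case_sum Inr Inl j) \<omega>) \<in> A}
      = prob {\<omega> \<in> space M. (\<lambda>j\<in>J. case_sum U V j \<omega>) \<in> A}"
    using indep by (intro prob_iid_permute) (auto simp: J_def)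
  moreover have "(\<lambda>j\<in>J. case_sum U V j \<omega>) \<in> A
      \<longleftrightarrow> order_stat (\<lambda>i. V i \<omega>) n k \<le> order_stat (\<lambda>i. U i \<omega>) n k"
    "(\<lambda>j\<in>J. case_sum U V (case_sum Inr Inl j) \<omega>) \<in> A
      \<longleftrightarrow> order_stat (\<lambda>i. U i \<omega>) n k \<le> order_stat (\<lambda>i. V i \<omega>) n k" for \<omega>
    unfolding A_def J_def by (auto simp: space_PiM Plus_def)
  ultimately show ?thesis by simp
qed

lemma prob_order_stat_le_half:
  fixes U V :: "nat \<Rightarrow> 'a \<Rightarrow> real"
  assumes indep: "indep_vars (\<lambda>_. borel) (case_sum U V) ({..<n} <+> {..<n})"
    and law_U: "\<And>i. i < n \<Longrightarrow> distr M borel (U i) = \<mu>"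
    and law_V: "\<And>i. i < n \<Longrightarrow> distr M borel (V i) = \<mu>"
    and atomless: "\<And>x. measure \<mu> {x} = 0"
    and k: "1 \<le> k" "k \<le> n"
  shows "prob {\<omega> \<in> space M. order_stat (\<lambda>i. U i \<omega>) n k \<le> order_stat (\<lambda>i. V i \<omega>) n k} = 1/2"
proof -
  have rv: "case_sum U V j \<in> borel_measurable M" if "j \<in> {..<n} <+> {..<n}" for j
    using indep that unfolding indep_vars_def by blast
  have [measurable]: "(\<lambda>\<omega>. order_stat (\<lambda>i. U i \<omega>) n k) \<in> borel_measurable M"
    "(\<lambda>\<omega>. order_stat (\<lambda>i. V i \<omega>) n k) \<in> borel_measurable M"
    using rv[of "Inl _"] rv[of "Inr _"] by (auto intro!: borel_measurable_order_stat[OF _ k])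
  \<comment> \<open>By exchangeability both orders are equally likely, and ties are null.\<close>
  have "prob {\<omega> \<in> space M. order_stat (\<lambda>i. U i \<omega>) n k = order_stat (\<lambda>i. V i \<omega>) n k} = 0"
    by (rule prob_order_stat_eq_zero[OF indep _ k]) (simp add: law_V atomless)
  then have "prob {\<omega> \<in> space M. order_stat (\<lambda>i. U i \<omega>) n k \<le> order_stat (\<lambda>i. V i \<omega>) n k}
      = prob {\<omega> \<in> space M. order_stat (\<lambda>i. U i \<omega>) n k < order_stat (\<lambda>i. V i \<omega>) n k}"
    by (rule prob_le_eq_less_if_ties_null[rotated 2]) simp_all
  also have "\<dots> = 1 - prob {\<omega> \<in> space M. order_stat (\<lambda>i. V i \<omega>) n k \<le> order_stat (\<lambda>i. U i \<omega>) n k}"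
    by (simp add: prob_le_eq_one_minus_less)
  finally show ?thesis using prob_order_stat_le_swap[OF indep law_U law_V k] by simp
qed

end

section \<open>Continuous distribution functions\<close>

context real_distribution
begin

lemma measure_cdf_le:
  assumes cont: "continuous_on UNIV (cdf M)"
  shows "measure M {x. cdf M x \<le> t} = max 0 (min 1 t)"
proof -
  let ?S = "{x. cdf M x \<le> t}"
  have down: "y \<in> ?S" if "x \<in> ?S" "y \<le> x" for x y
    using that cdf_nondecreasing[of y x] by simp
  consider "?S = {}" | "?S \<noteq> {}" "\<not> bdd_above ?S" | "bdd_above ?S" "?S \<noteq> {}"
    by (cases "?S = {}"; cases "bdd_above ?S") simp_all
  then show ?thesis
  proof cases
    case 1
    then have "t < cdf M x" for x by (metis empty_iff mem_Collect_eq not_le)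
    then have "\<forall>\<^sub>F x in at_bot. t \<le> cdf M x" by (intro always_eventually) (simp add: less_imp_le)
    then have "t \<le> 0" by (rule tendsto_lowerbound[OF cdf_lim_at_bot]) simp
    then show ?thesis using 1 by simp
  next
    case 2
    have "x \<in> ?S" for x
    proof -
      obtain y where "y \<in> ?S" "x < y" using 2(2) by (meson bdd_aboveI not_le)
      then show ?thesis using down[of y x] by simp
    qed
    then have "?S = UNIV" by auto
    have "\<forall>\<^sub>F x in at_top. cdf M x \<le> t" using \<open>\<And>x. x \<in> ?S\<close> by (intro always_eventually) simp
    then have "1 \<le> t" by (rule tendsto_upperbound[OF cdf_lim_at_top_prob]) simp
    then show ?thesis using \<open>?S = UNIV\<close> prob_space by (simp flip: space_eq_univ)
  next
    case 3
    define s where "s = Sup ?S"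
    have "closed ?S" by (rule closed_Collect_le[OF cont continuous_on_const])
    then have "s \<in> ?S" unfolding s_def by (rule closed_contains_Sup[OF 3(2,1)])
    have S_eq: "?S = {..s}"
    proof (intro set_eqI iffI)
      fix x assume "x \<in> ?S"
      then show "x \<in> {..s}" unfolding s_def using cSup_upper[OF _ 3(1)] by simp
    next
      fix x assume "x \<in> {..s}"
      then show "x \<in> ?S" using down[OF \<open>s \<in> ?S\<close>] by simp
    qed
    have "isCont (cdf M) s" using cont by (simp add: continuous_on_eq_continuous_at)
    then have "(cdf M \<longlongrightarrow> cdf M s) (at_right s)" by (simp add: isCont_def filterlim_at_split)
    moreover have "\<forall>\<^sub>F x in at_right s. t \<le> cdf M x"
      using eventually_at_right_less[of s]
    proof (rule eventually_mono)
      fix x assume "s < x"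
      then have "x \<notin> ?S" using S_eq by auto
      then show "t \<le> cdf M x" by simp
    qed
    ultimately have "t \<le> cdf M s" by (rule tendsto_lowerbound) simp
    then have "cdf M s = t" using \<open>s \<in> ?S\<close> by simp
    then show ?thesis using S_eq cdf_nonneg[of s] cdf_bounded_prob[of s] by (simp add: cdf_def2)
  qed
qed

lemma quantile_cdf_le_iff:
  assumes cont: "continuous_on UNIV (cdf M)" and v: "0 < v" "v < 1"
  shows "quantile (cdf M) v \<le> y \<longleftrightarrow> v \<le> cdf M y"
proof -
  let ?S = "{x. v \<le> cdf M x}"
  have "\<forall>\<^sub>F x in at_top. v < cdf M x" using cdf_lim_at_top_prob v(2) by (rule order_tendstoD)
  then obtain b where "v < cdf M b" by (auto simp: eventually_at_top_linorder)
  then have "?S \<noteq> {}" by (auto intro!: exI[of _ b])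
  moreover have "\<forall>\<^sub>F x in at_bot. cdf M x < v" using cdf_lim_at_bot v(1) by (rule order_tendstoD)
  then obtain a where a: "cdf M a < v" by (auto simp: eventually_at_bot_linorder)
  have bdd: "bdd_below ?S"
  proof (rule bdd_belowI)
    fix x assume "x \<in> ?S"
    then show "a \<le> x" using a cdf_nondecreasing[of x a] by (cases "a \<le> x") auto
  qed
  moreover have "closed ?S" by (rule closed_Collect_le[OF continuous_on_const cont])
  ultimately have q_mem: "quantile (cdf M) v \<in> ?S" unfolding quantile_def by (rule closed_contains_Inf)
  show ?thesis
  proof
    assume "quantile (cdf M) v \<le> y"
    then show "v \<le> cdf M y" using q_mem cdf_nondecreasing[of "quantile (cdf M) v" y] by simp
  next
    assume "v \<le> cdf M y"
    then show "quantile (cdf M) v \<le> y" unfolding quantile_def by (intro cInf_lower[OF _ bdd]) simp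
  qed
qed

end

lemma (in prob_space) cdf_distr_comp_cdf:
  assumes Z: "Z \<in> borel_measurable M" and F: "cdf (distr M borel Z) = F"
    and cont: "continuous_on UNIV F"
  shows "cdf (distr M borel (\<lambda>\<omega>. F (Z \<omega>))) = (\<lambda>t. max 0 (min 1 t))"
proof
  fix t
  interpret D: real_distribution "distr M borel Z" using Z by simp
  have [measurable]: "F \<in> borel_measurable borel"
    using F D.cdf_nondecreasing by (intro borel_measurable_mono) (auto simp: mono_def)
  have "cdf (distr M borel (\<lambda>\<omega>. F (Z \<omega>))) t = measure (distr (distr M borel Z) borel F) {..t}"
    using Z by (simp add: cdf_def distr_distr comp_def)
  also have "\<dots> = measure (distr M borel Z) {x. F x \<le> t}"
    by (subst measure_distr) (auto simp: vimage_def)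
  also have "\<dots> = max 0 (min 1 t)"
    using D.measure_cdf_le cont F by simp
  finally show "cdf (distr M borel (\<lambda>\<omega>. F (Z \<omega>))) t = max 0 (min 1 t)" .
qed

section \<open>Concentration of uniform order statistics\<close>

lemma (in prob_space) Hoeffding_count:
  fixes V :: "nat \<Rightarrow> 'a \<Rightarrow> real"
  assumes indep: "indep_vars (\<lambda>_. borel) V {..<n}"
    and law: "\<And>i. i < n \<Longrightarrow> prob {\<omega> \<in> space M. V i \<omega> \<le> a} = p"
    and n: "0 < n" and c: "0 \<le> c"
  shows "prob {\<omega> \<in> space M. n * (p + c) \<le> real (card {i. i < n \<and> V i \<omega> \<le> a})} \<le> exp (-2 * c\<^sup>2 * n)"
    and "prob {\<omega> \<in> space M. real (card {i. i < n \<and> V i \<omega> \<le> a}) \<le> n * (p - c)} \<le> exp (-2 * c\<^sup>2 * n)"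
proof -
  define I where "I = (\<lambda>i \<omega>. indicator {..a} (V i \<omega>) :: real)"
  have rv: "random_variable borel (V i)" if "i < n" for i
    using indep that unfolding indep_vars_def by blast
  have "expectation (I i) = p" if "i < n" for i
  proof -
    have "expectation (I i) = expectation (indicator {\<omega> \<in> space M. V i \<omega> \<le> a})"
      by (rule Bochner_Integration.integral_cong) (auto simp: I_def indicator_def)
    then show ?thesis using law[OF that] rv[OF that] by simp
  qed
  then have sum_exp: "(\<Sum>i<n. expectation (I i)) = n * p" by simp
  interpret Hoeffding_ineq M "{..<n}" I "\<lambda>_. 0" "\<lambda>_. 1" "n * p"
  proof unfold_locales
    show "indep_vars (\<lambda>_. borel) I {..<n}"
      unfolding I_def by (rule indep_vars_compose2[OF indep]) simp
    show "n * p \<equiv> \<Sum>i<n. expectation (I i)" using sum_exp by simp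
  qed (simp_all add: I_def)
  have count: "(\<Sum>i<n. I i \<omega>) = real (card {i. i < n \<and> V i \<omega> \<le> a})" for \<omega>
    unfolding real_card_Collect_eq_sum by (rule sum.cong) (simp_all add: I_def indicator_def)
  have eps: "0 \<le> c * n" and exponent: "-2 * (c * n)\<^sup>2 / (\<Sum>i<n. (1 - 0)\<^sup>2) = -2 * c\<^sup>2 * n"
    using c n by (simp_all add: power2_eq_square)
  have pos: "(\<Sum>i<n. (1 - (0::real))\<^sup>2) > 0" using n by simp
  have shift: "n * p + c * n = n * (p + c)" "n * p - c * n = n * (p - c)"
    by (simp_all add: algebra_simps)
  show "prob {\<omega> \<in> space M. n * (p + c) \<le> real (card {i. i < n \<and> V i \<omega> \<le> a})} \<le> exp (-2 * c\<^sup>2 * n)"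
    using Hoeffding_ineq_ge[OF eps pos] unfolding count exponent shift .
  show "prob {\<omega> \<in> space M. real (card {i. i < n \<and> V i \<omega> \<le> a}) \<le> n * (p - c)} \<le> exp (-2 * c\<^sup>2 * n)"
    using Hoeffding_ineq_le[OF eps pos] unfolding count exponent shift .
qed

lemma (in prob_space) prob_order_stat_null:
  fixes V :: "nat \<Rightarrow> 'a \<Rightarrow> real"
  assumes rv: "\<And>i. i < n \<Longrightarrow> V i \<in> borel_measurable M" and S: "S \<in> sets borel"
    and null: "\<And>i. i < n \<Longrightarrow> prob {\<omega> \<in> space M. V i \<omega> \<in> S} = 0"
    and k: "1 \<le> k" "k \<le> n"
  shows "prob {\<omega> \<in> space M. order_stat (\<lambda>i. V i \<omega>) n k \<in> S} = 0"
proof (rule prob_eq_0_AE)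
  have "AE \<omega> in M. V i \<omega> \<notin> S" if "i < n" for i
    using null[OF that] measurable_sets[OF rv[OF that] S]
    by (subst (asm) prob_Collect_eq_0) (simp_all add: vimage_def Int_def conj_commute)
  then have "AE \<omega> in M. \<forall>i\<in>{..<n}. V i \<omega> \<notin> S" by (intro AE_finite_allI) simp_all
  then show "AE \<omega> in M. order_stat (\<lambda>i. V i \<omega>) n k \<notin> S"
  proof (rule eventually_mono)
    fix \<omega> assume "\<forall>i\<in>{..<n}. V i \<omega> \<notin> S"
    moreover obtain i where "i < n" "order_stat (\<lambda>i. V i \<omega>) n k = V i \<omega>" by (rule order_stat_mem[OF k])
    ultimately show "order_stat (\<lambda>i. V i \<omega>) n k \<notin> S" by simp
  qed
qed

locale uniform_sample = prob_space +
  fixes V :: "nat \<Rightarrow> 'a \<Rightarrow> real" and n :: nat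
  assumes indep: "indep_vars (\<lambda>_. borel) V {..<n}"
    and cdf_uniform: "\<And>i. i < n \<Longrightarrow> cdf (distr M borel (V i)) = (\<lambda>t. max 0 (min 1 t))"
begin

lemma measurable_V [measurable]: "i < n \<Longrightarrow> V i \<in> borel_measurable M"
  using indep unfolding indep_vars_def by blast

lemma prob_V_le:
  assumes "i < n" shows "prob {\<omega> \<in> space M. V i \<omega> \<le> t} = max 0 (min 1 t)"
proof -
  have "prob {\<omega> \<in> space M. V i \<omega> \<le> t} = measure (distr M borel (V i)) {..t}"
    using assms by (simp add: measure_distr vimage_def Int_def conj_commute)
  also have "\<dots> = max 0 (min 1 t)" using cdf_uniform[OF assms] by (simp add: cdf_def fun_eq_iff)
  finally show ?thesis .
qed

lemma prob_V_ge_1: "i < n \<Longrightarrow> prob {\<omega> \<in> space M. 1 \<le> V i \<omega>} = 0"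
proof -
  assume i: "i < n"
  interpret D: real_distribution "distr M borel (V i)" using i by simp
  have "measure (distr M borel (V i)) {1} = 0"
    using cdf_uniform[OF i] D.isCont_cdf[of 1] by (simp add: continuous_intros)
  then have "prob {\<omega> \<in> space M. V i \<omega> = 1} = 0"
    using i by (simp add: measure_distr vimage_def Int_def conj_commute)
  moreover have "prob {\<omega> \<in> space M. 1 < V i \<omega>} = 0"
    using prob_le_eq_one_minus_less[of "V i" "\<lambda>_. 1"] prob_V_le[OF i, of 1] i by simp
  moreover have "{\<omega> \<in> space M. 1 \<le> V i \<omega>} = {\<omega> \<in> space M. 1 < V i \<omega>} \<union> {\<omega> \<in> space M. V i \<omega> = 1}"
    by auto
  ultimately show ?thesis
    using measure_Un_le[of "{\<omega> \<in> space M. 1 < V i \<omega>}" M "{\<omega> \<in> space M. V i \<omega> = 1}"] i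
    by (simp add: measure_le_0_iff)
qed

context
  fixes k :: nat
  assumes k: "1 \<le> k" "k \<le> n"
begin

lemma prob_order_stat_le_0: "prob {\<omega> \<in> space M. order_stat (\<lambda>i. V i \<omega>) n k \<le> 0} = 0"
  using prob_order_stat_null[where V=V and S="{..0}", OF measurable_V _ _ k] prob_V_le by simp

lemma prob_order_stat_ge_1: "prob {\<omega> \<in> space M. 1 \<le> order_stat (\<lambda>i. V i \<omega>) n k} = 0"
  using prob_order_stat_null[where V=V and S="{1..}", OF measurable_V _ _ k] prob_V_ge_1 by simp

lemma prob_order_stat_le_exp:
  assumes a: "0 \<le> a" "a \<le> 1" and c: "0 \<le> c" and k_ge: "real n * (a + c) \<le> k"
  shows "prob {\<omega> \<in> space M. order_stat (\<lambda>i. V i \<omega>) n k \<le> a} \<le> exp (-2 * c\<^sup>2 * n)"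
proof -
  have [measurable]: "(\<lambda>\<omega>. real (card {i. i < n \<and> V i \<omega> \<le> a})) \<in> borel_measurable M"
    by (rule borel_measurable_card_le) simp
  have "real n * (a + c) \<le> real (card {i. i < n \<and> V i \<omega> \<le> a})"
    if "order_stat (\<lambda>i. V i \<omega>) n k \<le> a" for \<omega>
    using that k_ge by (simp add: order_stat_le_iff_card[OF k])
  then have "prob {\<omega> \<in> space M. order_stat (\<lambda>i. V i \<omega>) n k \<le> a}
      \<le> prob {\<omega> \<in> space M. real n * (a + c) \<le> real (card {i. i < n \<and> V i \<omega> \<le> a})}"
    by (intro finite_measure_mono) auto
  also have "\<dots> \<le> exp (-2 * c\<^sup>2 * n)"
    using k a c by (intro Hoeffding_count(1)[OF indep]) (simp_all add: prob_V_le)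
  finally show ?thesis .
qed

lemma prob_order_stat_gt_exp:
  assumes b: "0 \<le> b" "b \<le> 1" and c: "0 \<le> c" and k_le: "real k - 1 \<le> real n * (b - c)"
  shows "prob {\<omega> \<in> space M. b < order_stat (\<lambda>i. V i \<omega>) n k} \<le> exp (-2 * c\<^sup>2 * n)"
proof -
  have [measurable]: "(\<lambda>\<omega>. real (card {i. i < n \<and> V i \<omega> \<le> b})) \<in> borel_measurable M"
    by (rule borel_measurable_card_le) simp
  have "real (card {i. i < n \<and> V i \<omega> \<le> b}) \<le> real n * (b - c)"
    if "b < order_stat (\<lambda>i. V i \<omega>) n k" for \<omega>
  proof -
    have "card {i. i < n \<and> V i \<omega> \<le> b} < k"
      using that order_stat_le_iff_card[OF k, of "\<lambda>i. V i \<omega>" b] by linarith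
    then show ?thesis using k_le by linarith
  qed
  then have "prob {\<omega> \<in> space M. b < order_stat (\<lambda>i. V i \<omega>) n k}
      \<le> prob {\<omega> \<in> space M. real (card {i. i < n \<and> V i \<omega> \<le> b}) \<le> real n * (b - c)}"
    by (intro finite_measure_mono) auto
  also have "\<dots> \<le> exp (-2 * c\<^sup>2 * n)"
    using k b c by (intro Hoeffding_count(2)[OF indep]) (simp_all add: prob_V_le)
  finally show ?thesis .
qed

end

end

section \<open>Two independent samples\<close>

locale two_sample = prob_space +
  fixes X Y :: "nat \<Rightarrow> 'a \<Rightarrow> real" and n :: nat and FX FY :: "real \<Rightarrow> real"
  assumes indep: "indep_vars (\<lambda>_. borel) (case_sum X Y) ({..<n} <+> {..<n})"
    and cdf_X: "\<And>i. i < n \<Longrightarrow> cdf (distr M borel (X i)) = FX"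
    and cdf_Y: "\<And>i. i < n \<Longrightarrow> cdf (distr M borel (Y i)) = FY"
    and cont_FX: "continuous_on UNIV FX" and cont_FY: "continuous_on UNIV FY"
begin

lemma measurable_X [measurable]: "i < n \<Longrightarrow> X i \<in> borel_measurable M"
  and measurable_Y [measurable]: "i < n \<Longrightarrow> Y i \<in> borel_measurable M"
  using indep unfolding indep_vars_def by (auto dest: bspec[of _ _ "Inl i"] bspec[of _ _ "Inr i"])

lemma swap: "two_sample M Y X n FY FX"
proof
  have "case_sum Inr Inl ` ({..<n} <+> {..<n}) = {..<n} <+> {..<n}"
    by (auto simp: Plus_def image_Un image_image Un_commute)
  moreover have "inj_on (case_sum Inr Inl) ({..<n} <+> {..<n})"
    by (rule inj_onI) (auto split: sum.splits)
  ultimately have "indep_vars (\<lambda>_. borel) (\<lambda>j. case_sum X Y (case_sum Inr Inl j)) ({..<n} <+> {..<n})"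
    using indep_vars_reindex[of "case_sum Inr Inl" "{..<n} <+> {..<n}" "\<lambda>_. borel" "case_sum X Y"] indep
    by simp
  moreover have "(\<lambda>j. case_sum X Y (case_sum Inr Inl j)) = case_sum Y X" by (auto split: sum.split)
  ultimately show "indep_vars (\<lambda>_. borel) (case_sum Y X) ({..<n} <+> {..<n})" by simp
qed (use cdf_X cdf_Y cont_FX cont_FY in auto)

lemma uniform_sample_FY: "uniform_sample M (\<lambda>i \<omega>. FY (Y i \<omega>)) n"
proof
  have "indep_vars (\<lambda>_. borel) (case_sum X Y) (Inr ` {..<n})"
    using indep by (rule indep_vars_subset) auto
  then have "indep_vars (\<lambda>_. borel) Y {..<n}"
    using indep_vars_reindex[of Inr "{..<n}" "\<lambda>_. borel" "case_sum X Y"] by simp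
  moreover have "FY \<in> borel_measurable borel" by (rule borel_measurable_continuous_onI[OF cont_FY])
  ultimately show "indep_vars (\<lambda>_. borel) (\<lambda>i \<omega>. FY (Y i \<omega>)) {..<n}"
    by (rule indep_vars_compose2)
qed (use cdf_distr_comp_cdf[OF measurable_Y cdf_Y cont_FY] in auto)

lemma indep_cdf_transform:
  "indep_vars (\<lambda>_. borel) (case_sum (\<lambda>i \<omega>. FX (X i \<omega>)) (\<lambda>i \<omega>. FY (Y i \<omega>))) ({..<n} <+> {..<n})"
proof -
  have "indep_vars (\<lambda>_. borel) (\<lambda>j \<omega>. case_sum (\<lambda>_. FX) (\<lambda>_. FY) j (case_sum X Y j \<omega>))
      ({..<n} <+> {..<n})"
    using indep by (rule indep_vars_compose2)
      (auto split: sum.split intro: borel_measurable_continuous_onI cont_FX cont_FY)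
  moreover have "(\<lambda>j \<omega>. case_sum (\<lambda>_. FX) (\<lambda>_. FY) j (case_sum X Y j \<omega>))
      = case_sum (\<lambda>i \<omega>. FX (X i \<omega>)) (\<lambda>i \<omega>. FY (Y i \<omega>))"
    by (auto split: sum.split)
  ultimately show ?thesis by simp
qed

context
  fixes k :: nat
  assumes k: "1 \<le> k" "k \<le> n"
begin

lemma prob_order_stat_ties:
  "prob {\<omega> \<in> space M. order_stat (\<lambda>i. X i \<omega>) n k = order_stat (\<lambda>i. Y i \<omega>) n k} = 0"
proof (rule prob_order_stat_eq_zero[OF indep _ k])
  fix i x assume "i < n"
  interpret D: real_distribution "distr M borel (Y i)" using \<open>i < n\<close> by simp
  show "measure (distr M borel (Y i)) {x} = 0"
    using cont_FY cdf_Y[OF \<open>i < n\<close>] D.isCont_cdf by (simp add: continuous_on_eq_continuous_at)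
qed

lemma mono_FY: "mono FY"
  and quantile_FY_le_iff: "0 < v \<Longrightarrow> v < 1 \<Longrightarrow> quantile FY v \<le> y \<longleftrightarrow> v \<le> FY y"
proof -
  have "0 < n" using k by simp
  interpret D: real_distribution "distr M borel (Y 0)" using \<open>0 < n\<close> by simp
  have FY: "FY = cdf (distr M borel (Y 0))" using cdf_Y \<open>0 < n\<close> by simp
  show "mono FY" unfolding FY mono_def using D.cdf_nondecreasing by auto
  show "0 < v \<Longrightarrow> v < 1 \<Longrightarrow> quantile FY v \<le> y \<longleftrightarrow> v \<le> FY y"
    using D.quantile_cdf_le_iff cont_FY unfolding FY by simp
qed

lemma order_stat_cdf_transform: "order_stat (\<lambda>i. FY (Y i \<omega>)) n k = FY (order_stat (\<lambda>i. Y i \<omega>) n k)"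
  by (rule order_stat_mono_comp[OF mono_FY k])

lemma prob_order_stat_cdf_transform_le_half:
  "prob {\<omega> \<in> space M. order_stat (\<lambda>i. FX (X i \<omega>)) n k \<le> order_stat (\<lambda>i. FY (Y i \<omega>)) n k} = 1/2"
proof -
  interpret U: uniform_sample M "\<lambda>i \<omega>. FX (X i \<omega>)" n by (rule two_sample.uniform_sample_FY[OF swap])
  interpret V: uniform_sample M "\<lambda>i \<omega>. FY (Y i \<omega>)" n by (rule uniform_sample_FY)
  have "0 < n" using k by simp
  define \<mu> where "\<mu> = distr M borel (\<lambda>\<omega>. FY (Y 0 \<omega>))"
  interpret \<mu>: real_distribution \<mu> unfolding \<mu>_def using \<open>0 < n\<close> by simp
  have "distr M borel (\<lambda>\<omega>. FX (X i \<omega>)) = \<mu>" "distr M borel (\<lambda>\<omega>. FY (Y i \<omega>)) = \<mu>" if "i < n" for i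
    unfolding \<mu>_def using that \<open>0 < n\<close> U.cdf_uniform V.cdf_uniform by (auto intro!: cdf_unique)
  moreover have "measure \<mu> {x} = 0" for x
    using V.cdf_uniform[OF \<open>0 < n\<close>] \<mu>.isCont_cdf[of x] by (simp add: \<mu>_def continuous_intros)
  ultimately show ?thesis by (intro prob_order_stat_le_half[OF indep_cdf_transform _ _ _ k])
qed

lemma prob_order_stat_le_lower_bound:
  assumes ab: "0 \<le> a" "b \<le> 1"
    and quantile_le: "\<And>u. a < u \<Longrightarrow> u < b \<Longrightarrow> quantile FX u \<le> quantile FY u"
  shows "1/2 - prob {\<omega> \<in> space M. order_stat (\<lambda>i. FY (Y i \<omega>)) n k \<notin> {a<..<b}}
    \<le> prob {\<omega> \<in> space M. order_stat (\<lambda>i. X i \<omega>) n k \<le> order_stat (\<lambda>i. Y i \<omega>) n k}"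
proof -
  define oX oY where "oX \<omega> = order_stat (\<lambda>i. X i \<omega>) n k" and "oY \<omega> = order_stat (\<lambda>i. Y i \<omega>) n k" for \<omega>
  define oU oV where "oU \<omega> = order_stat (\<lambda>i. FX (X i \<omega>)) n k"
    and "oV \<omega> = order_stat (\<lambda>i. FY (Y i \<omega>)) n k" for \<omega>
  have [measurable]: "FX \<in> borel_measurable borel" "FY \<in> borel_measurable borel"
    using cont_FX cont_FY by (auto intro: borel_measurable_continuous_onI)
  have [measurable]: "oX \<in> borel_measurable M" "oY \<in> borel_measurable M"
    "oU \<in> borel_measurable M" "oV \<in> borel_measurable M"
    unfolding oX_def oY_def oU_def oV_def by (intro borel_measurable_order_stat[OF _ k]; simp)+
  have oU: "oU \<omega> = FX (oX \<omega>)" and oV: "oV \<omega> = FY (oY \<omega>)" for \<omega>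
    unfolding oU_def oX_def oV_def oY_def
    by (rule two_sample.order_stat_cdf_transform[OF swap k], rule order_stat_cdf_transform)
  have "{\<omega> \<in> space M. oY \<omega> < oX \<omega>}
      \<subseteq> {\<omega> \<in> space M. oV \<omega> \<le> oU \<omega>} \<union> {\<omega> \<in> space M. oV \<omega> \<notin> {a<..<b}}"
  proof safe
    \<comment> \<open>For v = F_Y(Y_(k)): quantile F_X v \<le> quantile F_Y v \<le> Y_(k) < X_(k), so v \<le> F_X(X_(k)).\<close>
    fix \<omega> assume "\<omega> \<in> space M" "oY \<omega> < oX \<omega>" "oV \<omega> \<in> {a<..<b}"
    then have v: "0 < oV \<omega>" "oV \<omega> < 1" and "quantile FX (oV \<omega>) \<le> quantile FY (oV \<omega>)"
      using ab quantile_le by auto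
    moreover have "quantile FY (oV \<omega>) \<le> oY \<omega>" using quantile_FY_le_iff[OF v] oV by simp
    ultimately have "quantile FX (oV \<omega>) \<le> oX \<omega>" using \<open>oY \<omega> < oX \<omega>\<close> by linarith
    then show "oV \<omega> \<le> oU \<omega>" using two_sample.quantile_FY_le_iff[OF swap k v] oU by simp
  qed
  then have "prob {\<omega> \<in> space M. oY \<omega> < oX \<omega>}
      \<le> prob ({\<omega> \<in> space M. oV \<omega> \<le> oU \<omega>} \<union> {\<omega> \<in> space M. oV \<omega> \<notin> {a<..<b}})"
    by (rule finite_measure_mono) measurable
  also have "\<dots> \<le> prob {\<omega> \<in> space M. oV \<omega> \<le> oU \<omega>} + prob {\<omega> \<in> space M. oV \<omega> \<notin> {a<..<b}}"
    by (rule measure_Un_le) measurable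
  also have "prob {\<omega> \<in> space M. oV \<omega> \<le> oU \<omega>} = 1/2"
    unfolding oU_def oV_def by (rule two_sample.prob_order_stat_cdf_transform_le_half[OF swap k])
  finally have "prob {\<omega> \<in> space M. oY \<omega> < oX \<omega>} \<le> 1/2 + prob {\<omega> \<in> space M. oV \<omega> \<notin> {a<..<b}}" .
  moreover have "prob {\<omega> \<in> space M. oX \<omega> \<le> oY \<omega>} = 1 - prob {\<omega> \<in> space M. oY \<omega> < oX \<omega>}"
    by (rule prob_le_eq_one_minus_less) measurable
  ultimately show ?thesis unfolding oX_def oY_def oV_def by linarith
qed

lemma prob_order_stat_le_upper_bound:
  assumes ab: "0 \<le> a" "b \<le> 1"
    and quantile_le: "\<And>u. a < u \<Longrightarrow> u < b \<Longrightarrow> quantile FY u \<le> quantile FX u"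
  shows "prob {\<omega> \<in> space M. order_stat (\<lambda>i. X i \<omega>) n k \<le> order_stat (\<lambda>i. Y i \<omega>) n k}
    \<le> 1/2 + prob {\<omega> \<in> space M. order_stat (\<lambda>i. FX (X i \<omega>)) n k \<notin> {a<..<b}}"
proof -
  have [measurable]: "(\<lambda>\<omega>. order_stat (\<lambda>i. X i \<omega>) n k) \<in> borel_measurable M"
    "(\<lambda>\<omega>. order_stat (\<lambda>i. Y i \<omega>) n k) \<in> borel_measurable M"
    by (auto intro!: borel_measurable_order_stat[OF _ k])
  have "prob {\<omega> \<in> space M. order_stat (\<lambda>i. X i \<omega>) n k \<le> order_stat (\<lambda>i. Y i \<omega>) n k}
      = 1 - prob {\<omega> \<in> space M. order_stat (\<lambda>i. Y i \<omega>) n k < order_stat (\<lambda>i. X i \<omega>) n k}"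
    by (rule prob_le_eq_one_minus_less) measurable
  also have "\<dots> = 1 - prob {\<omega> \<in> space M. order_stat (\<lambda>i. Y i \<omega>) n k \<le> order_stat (\<lambda>i. X i \<omega>) n k}"
  proof -
    have "{\<omega> \<in> space M. order_stat (\<lambda>i. Y i \<omega>) n k = order_stat (\<lambda>i. X i \<omega>) n k}
        = {\<omega> \<in> space M. order_stat (\<lambda>i. X i \<omega>) n k = order_stat (\<lambda>i. Y i \<omega>) n k}" by auto
    then show ?thesis using prob_order_stat_ties by (subst prob_le_eq_less_if_ties_null) simp_all
  qed
  also have "\<dots> \<le> 1/2 + prob {\<omega> \<in> space M. order_stat (\<lambda>i. FX (X i \<omega>)) n k \<notin> {a<..<b}}"
    using two_sample.prob_order_stat_le_lower_bound[OF swap k ab quantile_le] by simp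
  finally show ?thesis .
qed

end

end

section \<open>Asymptotics\<close>

lemma tendsto_of_diff_bigo_inverse:
  fixes g :: "nat \<Rightarrow> real"
  assumes "(\<lambda>n. g n - c) \<in> O(\<lambda>n. 1 / real n)"
  shows "g \<longlonglongrightarrow> c"
proof -
  have "(\<lambda>n. 1 / real n) \<in> o(\<lambda>n. 1::real)"
    by (rule smalloI_tendsto) (simp_all add: lim_const_over_n)
  then have "(\<lambda>n. g n - c) \<in> o(\<lambda>n. 1::real)" by (rule landau_o.big_small_trans[OF assms])
  then have "(\<lambda>n. (g n - c) / 1) \<longlonglongrightarrow> 0" by (rule smalloD_tendsto)
  then show ?thesis by (simp add: LIM_zero_cancel)
qed

lemma order_stat_index_bounds:
  fixes g :: real
  assumes g: "0 \<le> g" "g \<le> 1" and n: "1 \<le> n"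
  defines "k \<equiv> 1 + nat \<lfloor>real (n - 1) * g\<rfloor>"
  shows "k \<le> n" and "real n * g - 1 < real k" and "real k \<le> real n * g + 1"
proof -
  have "0 \<le> real (n - 1) * g" using g by simp
  then have k: "real k = 1 + real_of_int \<lfloor>real (n - 1) * g\<rfloor>" unfolding k_def by simp
  have n1: "real (n - 1) = real n - 1" using n by simp
  have "real (n - 1) * g \<le> real (n - 1)" using g by (simp add: mult_left_le)
  then show "k \<le> n" using k n1 of_int_floor_le[of "real (n - 1) * g"] by linarith
  show "real n * g - 1 < real k" "real k \<le> real n * g + 1"
    using k n1 g real_of_int_floor_gt_diff_one[of "real (n - 1) * g"] of_int_floor_le[of "real (n - 1) * g"]
    by (auto simp: algebra_simps)
qed

lemma tendsto_order_stat_index_ratio: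
  fixes g :: "nat \<Rightarrow> real"
  assumes g: "\<And>n. g n \<in> {0..1}" and lim: "g \<longlonglongrightarrow> c"
  shows "(\<lambda>n. real (1 + nat \<lfloor>real (n - 1) * g n\<rfloor>) / real n) \<longlonglongrightarrow> c"
proof (rule tendsto_sandwich)
  have bounds: "g n - 1 / n \<le> real (1 + nat \<lfloor>real (n - 1) * g n\<rfloor>) / n"
    "real (1 + nat \<lfloor>real (n - 1) * g n\<rfloor>) / n \<le> g n + 1 / n" if "1 \<le> n" for n
  proof -
    have n: "0 < real n" using \<open>1 \<le> n\<close> by simp
    have *: "g n - 1 / n \<le> x / n" "x / n \<le> g n + 1 / n"
      if "real n * g n - 1 < x" "x \<le> real n * g n + 1" for x
    proof -
      have "g n - 1 / n = (real n * g n - 1) / n" "g n + 1 / n = (real n * g n + 1) / n"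
        using n by (simp_all add: field_simps)
      then show "g n - 1 / n \<le> x / n" "x / n \<le> g n + 1 / n"
        using that n by (simp_all add: divide_right_mono)
    qed
    show "g n - 1 / n \<le> real (1 + nat \<lfloor>real (n - 1) * g n\<rfloor>) / n"
      "real (1 + nat \<lfloor>real (n - 1) * g n\<rfloor>) / n \<le> g n + 1 / n"
      using order_stat_index_bounds(2,3)[of "g n" n] g[of n] that by (intro *; simp)+
  qed
  show "\<forall>\<^sub>F n in sequentially. g n - 1 / n \<le> real (1 + nat \<lfloor>real (n - 1) * g n\<rfloor>) / n"
    "\<forall>\<^sub>F n in sequentially. real (1 + nat \<lfloor>real (n - 1) * g n\<rfloor>) / n \<le> g n + 1 / n"
    by (rule eventually_mono[OF eventually_ge_at_top[of 1]], erule bounds)+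
  show "(\<lambda>n. g n - 1 / real n) \<longlonglongrightarrow> c" "(\<lambda>n. g n + 1 / real n) \<longlonglongrightarrow> c"
    using tendsto_diff[OF lim lim_inverse_n'] tendsto_add[OF lim lim_inverse_n'] by simp_all
qed

lemma tendsto_zero_of_exp_bound:
  fixes f :: "nat \<Rightarrow> real" and c :: real
  assumes c: "0 < c" and bound: "\<forall>\<^sub>F n in sequentially. 0 \<le> f n \<and> f n \<le> exp (- c * real n)"
  shows "f \<longlonglongrightarrow> 0"
proof (rule tendsto_sandwich[of "\<lambda>_. 0" f _ "\<lambda>n. exp (- c) ^ n"])
  have "exp (- c * real n) = exp (- c) ^ n" for n
    by (simp add: exp_of_nat_mult[symmetric] mult.commute)
  then show "\<forall>\<^sub>F n in sequentially. 0 \<le> f n" "\<forall>\<^sub>F n in sequentially. f n \<le> exp (- c) ^ n"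
    using bound by (auto elim: eventually_mono)
  show "(\<lambda>n. exp (- c) ^ n) \<longlonglongrightarrow> 0" using c by (intro LIMSEQ_power_zero) simp
qed simp

context
  fixes M :: "nat \<Rightarrow> 'a measure" and V :: "nat \<Rightarrow> nat \<Rightarrow> 'a \<Rightarrow> real" and k :: "nat \<Rightarrow> nat"
    and \<gamma> :: real
  assumes sample: "\<And>n. uniform_sample (M n) (V n) n"
    and k: "\<And>n. 1 \<le> n \<Longrightarrow> 1 \<le> k n" "\<And>n. 1 \<le> n \<Longrightarrow> k n \<le> n"
    and ratio: "(\<lambda>n. real (k n) / real n) \<longlonglongrightarrow> \<gamma>"
begin

lemma limit_ratio_bounds: "0 \<le> \<gamma>" "\<gamma> \<le> 1"
proof -
  show "0 \<le> \<gamma>" using ratio by (rule LIMSEQ_le_const) simp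
  have "\<forall>n\<ge>1. real (k n) / real n \<le> 1" using k(2) by (simp add: divide_le_eq_1)
  then show "\<gamma> \<le> 1" by (intro LIMSEQ_le_const2[OF ratio]) blast
qed

lemma tendsto_prob_order_stat_le:
  assumes a: "0 \<le> a" "a = 0 \<or> a < \<gamma>"
  shows "(\<lambda>n. measure (M n) {\<omega> \<in> space (M n). order_stat (\<lambda>i. V n i \<omega>) n (k n) \<le> a}) \<longlonglongrightarrow> 0"
proof (cases "a = 0")
  case True
  have "measure (M n) {\<omega> \<in> space (M n). order_stat (\<lambda>i. V n i \<omega>) n (k n) \<le> a} = 0" if "1 \<le> n" for n
    using uniform_sample.prob_order_stat_le_0[OF sample] k(1,2)[OF that] True by simp
  then show ?thesis
    by (intro tendsto_eventually eventually_mono[OF eventually_ge_at_top[of 1]])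
next
  case False
  define c where "c = (\<gamma> - a) / 2"
  have c: "0 < c" using False a by (simp add: c_def)
  have "a \<le> 1" using False a limit_ratio_bounds by simp
  have "\<forall>\<^sub>F n in sequentially. a + c < real (k n) / real n"
    using ratio by (rule order_tendstoD) (use False a in \<open>simp add: c_def field_simps\<close>)
  with eventually_ge_at_top[of 1]
  have "\<forall>\<^sub>F n in sequentially.
    0 \<le> measure (M n) {\<omega> \<in> space (M n). order_stat (\<lambda>i. V n i \<omega>) n (k n) \<le> a} \<and>
    measure (M n) {\<omega> \<in> space (M n). order_stat (\<lambda>i. V n i \<omega>) n (k n) \<le> a} \<le> exp (- (2 * c\<^sup>2) * n)"
  proof eventually_elim
    case (elim n)
    then have "real n * (a + c) \<le> k n" by (simp add: field_simps)
    then show ?case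
      using uniform_sample.prob_order_stat_le_exp[OF sample k(1,2)[OF \<open>1 \<le> n\<close>] a(1) \<open>a \<le> 1\<close> less_imp_le[OF c]]
      by simp
  qed
  then show ?thesis using c by (intro tendsto_zero_of_exp_bound[of "2 * c\<^sup>2"]) simp_all
qed

lemma tendsto_prob_order_stat_ge:
  assumes b: "b \<le> 1" "b = 1 \<or> \<gamma> < b"
  shows "(\<lambda>n. measure (M n) {\<omega> \<in> space (M n). b \<le> order_stat (\<lambda>i. V n i \<omega>) n (k n)}) \<longlonglongrightarrow> 0"
proof (cases "b = 1")
  case True
  have "measure (M n) {\<omega> \<in> space (M n). b \<le> order_stat (\<lambda>i. V n i \<omega>) n (k n)} = 0" if "1 \<le> n" for n
    using uniform_sample.prob_order_stat_ge_1[OF sample] k(1,2)[OF that] True by simp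
  then show ?thesis
    by (intro tendsto_eventually eventually_mono[OF eventually_ge_at_top[of 1]])
next
  case False
  define c where "c = (b - \<gamma>) / 4"
  define b' where "b' = b - c"
  have c: "0 < c" and b': "0 \<le> b'" "b' \<le> 1" "b' < b"
    using False b limit_ratio_bounds by (simp_all add: c_def b'_def field_simps)
  have "\<forall>\<^sub>F n in sequentially. real (k n) / real n < b' - c"
    using ratio by (rule order_tendstoD) (use False b in \<open>simp add: c_def b'_def field_simps\<close>)
  with eventually_ge_at_top[of 1]
  have "\<forall>\<^sub>F n in sequentially.
    0 \<le> measure (M n) {\<omega> \<in> space (M n). b \<le> order_stat (\<lambda>i. V n i \<omega>) n (k n)} \<and>
    measure (M n) {\<omega> \<in> space (M n). b \<le> order_stat (\<lambda>i. V n i \<omega>) n (k n)} \<le> exp (- (2 * c\<^sup>2) * n)"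
  proof eventually_elim
    case (elim n)
    interpret uniform_sample "M n" "V n" n by (rule sample)
    have "real (k n) - 1 \<le> real n * (b' - c)" using elim by (simp add: field_simps)
    have [measurable]: "(\<lambda>\<omega>. order_stat (\<lambda>i. V n i \<omega>) n (k n)) \<in> borel_measurable (M n)"
      using k(1,2)[OF \<open>1 \<le> n\<close>] by (intro borel_measurable_order_stat) simp_all
    have "prob {\<omega> \<in> space (M n). b \<le> order_stat (\<lambda>i. V n i \<omega>) n (k n)}
        \<le> prob {\<omega> \<in> space (M n). b' < order_stat (\<lambda>i. V n i \<omega>) n (k n)}"
      using \<open>b' < b\<close> by (intro finite_measure_mono) auto
    also have "\<dots> \<le> exp (- (2 * c\<^sup>2) * n)"
      using prob_order_stat_gt_exp[OF k(1,2)[OF \<open>1 \<le> n\<close>] b'(1,2) less_imp_le[OF c] \<open>real (k n) - 1 \<le> _\<close>]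
      by simp
    finally show ?case by simp
  qed
  then show ?thesis using c by (intro tendsto_zero_of_exp_bound[of "2 * c\<^sup>2"]) simp_all
qed

lemma tendsto_prob_order_stat_outside:
  assumes a: "0 \<le> a" "a = 0 \<or> a < \<gamma>" and b: "b \<le> 1" "b = 1 \<or> \<gamma> < b"
  shows "(\<lambda>n. measure (M n) {\<omega> \<in> space (M n). order_stat (\<lambda>i. V n i \<omega>) n (k n) \<notin> {a<..<b}}) \<longlonglongrightarrow> 0"
proof -
  have "measure (M n) {\<omega> \<in> space (M n). order_stat (\<lambda>i. V n i \<omega>) n (k n) \<notin> {a<..<b}}
      \<le> measure (M n) {\<omega> \<in> space (M n). order_stat (\<lambda>i. V n i \<omega>) n (k n) \<le> a}
      + measure (M n) {\<omega> \<in> space (M n). b \<le> order_stat (\<lambda>i. V n i \<omega>) n (k n)}" if "1 \<le> n" for n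
  proof -
    interpret uniform_sample "M n" "V n" n by (rule sample)
    have [measurable]: "(\<lambda>\<omega>. order_stat (\<lambda>i. V n i \<omega>) n (k n)) \<in> borel_measurable (M n)"
      using k(1,2)[OF that] by (intro borel_measurable_order_stat) simp_all
    have "prob {\<omega> \<in> space (M n). order_stat (\<lambda>i. V n i \<omega>) n (k n) \<notin> {a<..<b}}
        \<le> prob ({\<omega> \<in> space (M n). order_stat (\<lambda>i. V n i \<omega>) n (k n) \<le> a}
             \<union> {\<omega> \<in> space (M n). b \<le> order_stat (\<lambda>i. V n i \<omega>) n (k n)})"
      by (rule finite_measure_mono) auto
    also have "\<dots> \<le> prob {\<omega> \<in> space (M n). order_stat (\<lambda>i. V n i \<omega>) n (k n) \<le> a}
        + prob {\<omega> \<in> space (M n). b \<le> order_stat (\<lambda>i. V n i \<omega>) n (k n)}"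
      by (rule measure_Un_le) measurable
    finally show ?thesis .
  qed
  then have upper: "\<forall>\<^sub>F n in sequentially.
      measure (M n) {\<omega> \<in> space (M n). order_stat (\<lambda>i. V n i \<omega>) n (k n) \<notin> {a<..<b}}
      \<le> measure (M n) {\<omega> \<in> space (M n). order_stat (\<lambda>i. V n i \<omega>) n (k n) \<le> a}
      + measure (M n) {\<omega> \<in> space (M n). b \<le> order_stat (\<lambda>i. V n i \<omega>) n (k n)}"
    by (rule eventually_mono[OF eventually_ge_at_top[of 1]])
  have lower: "\<forall>\<^sub>F n in sequentially.
      0 \<le> measure (M n) {\<omega> \<in> space (M n). order_stat (\<lambda>i. V n i \<omega>) n (k n) \<notin> {a<..<b}}"
    by simp
  have "(\<lambda>n. measure (M n) {\<omega> \<in> space (M n). order_stat (\<lambda>i. V n i \<omega>) n (k n) \<le> a}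
      + measure (M n) {\<omega> \<in> space (M n). b \<le> order_stat (\<lambda>i. V n i \<omega>) n (k n)}) \<longlonglongrightarrow> 0"
    using tendsto_add[OF tendsto_prob_order_stat_le[OF a] tendsto_prob_order_stat_ge[OF b]] by simp
  then show ?thesis by (rule tendsto_sandwich[OF lower upper tendsto_const])
qed

end

lemma dist_pos_obtains_interval:
  assumes "dist_pos \<gamma> A" "\<gamma> \<in> {0..1}"
  obtains a b where "0 \<le> a" "a = 0 \<or> a < \<gamma>" "b \<le> 1" "b = 1 \<or> \<gamma> < b" "{a<..<b} \<inter> A = {}"
proof -
  obtain \<delta> where "0 < \<delta>" and \<delta>: "\<And>u. u \<in> A \<Longrightarrow> \<delta> \<le> \<bar>u - \<gamma>\<bar>"
  proof (cases "A = {}")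
    case False
    then have "0 < infdist \<gamma> A" using assms(1) by (simp add: dist_pos_def)
    moreover have "infdist \<gamma> A \<le> \<bar>u - \<gamma>\<bar>" if "u \<in> A" for u
      using infdist_le[OF that, of \<gamma>] by (simp add: dist_real_def abs_minus_commute)
    ultimately show ?thesis using that by blast
  qed (use that[of 1] in simp)
  show ?thesis
  proof (rule that[of "max 0 (\<gamma> - \<delta>)" "min 1 (\<gamma> + \<delta>)"])
    show "{max 0 (\<gamma> - \<delta>)<..<min 1 (\<gamma> + \<delta>)} \<inter> A = {}" using \<delta> by fastforce
  qed (use \<open>0 < \<delta>\<close> assms(2) in auto)
qed

lemma ereal_le_liminf_of_lower_bound:
  fixes f e :: "nat \<Rightarrow> real"
  assumes lower: "\<forall>\<^sub>F n in sequentially. l - e n \<le> f n" and e: "e \<longlonglongrightarrow> 0"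
  shows "ereal l \<le> liminf (\<lambda>n. ereal (f n))"
proof -
  have "(\<lambda>n. ereal (l - e n)) \<longlonglongrightarrow> ereal l"
    using tendsto_diff[OF tendsto_const e, of l] by (simp add: lim_ereal)
  then have "liminf (\<lambda>n. ereal (l - e n)) = ereal l" by (rule lim_imp_Liminf[rotated]) simp
  moreover have "liminf (\<lambda>n. ereal (l - e n)) \<le> liminf (\<lambda>n. ereal (f n))"
    using lower by (intro Liminf_mono) (auto elim: eventually_mono)
  ultimately show ?thesis by simp
qed

context
  fixes M :: "nat \<Rightarrow> 'a measure" and X Y :: "nat \<Rightarrow> nat \<Rightarrow> 'a \<Rightarrow> real" and FX FY :: "real \<Rightarrow> real"
    and k :: "nat \<Rightarrow> nat" and \<gamma> a b :: real
  assumes samples: "\<And>n. two_sample (M n) (X n) (Y n) n FX FY"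
    and k: "\<And>n. 1 \<le> n \<Longrightarrow> 1 \<le> k n" "\<And>n. 1 \<le> n \<Longrightarrow> k n \<le> n"
    and ratio: "(\<lambda>n. real (k n) / real n) \<longlonglongrightarrow> \<gamma>"
    and a: "0 \<le> a" "a = 0 \<or> a < \<gamma>" and b: "b \<le> 1" "b = 1 \<or> \<gamma> < b"
begin

lemma liminf_prob_order_stat_le_ge_half:
  assumes "\<And>u. a < u \<Longrightarrow> u < b \<Longrightarrow> quantile FX u \<le> quantile FY u"
  shows "ereal (1/2) \<le> liminf (\<lambda>n. ereal (measure (M n)
    {\<omega> \<in> space (M n). order_stat (\<lambda>i. X n i \<omega>) n (k n) \<le> order_stat (\<lambda>i. Y n i \<omega>) n (k n)}))"
proof (rule ereal_le_liminf_of_lower_bound)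
  show "(\<lambda>n. measure (M n) {\<omega> \<in> space (M n). order_stat (\<lambda>i. FY (Y n i \<omega>)) n (k n) \<notin> {a<..<b}})
      \<longlonglongrightarrow> 0"
    using two_sample.uniform_sample_FY[OF samples] k ratio a b by (rule tendsto_prob_order_stat_outside)
  show "\<forall>\<^sub>F n in sequentially.
    1/2 - measure (M n) {\<omega> \<in> space (M n). order_stat (\<lambda>i. FY (Y n i \<omega>)) n (k n) \<notin> {a<..<b}}
    \<le> measure (M n) {\<omega> \<in> space (M n). order_stat (\<lambda>i. X n i \<omega>) n (k n) \<le> order_stat (\<lambda>i. Y n i \<omega>) n (k n)}"
  proof (rule eventually_mono[OF eventually_ge_at_top[of 1]])
    fix n :: nat assume "1 \<le> n"
    then show "1/2 - measure (M n) {\<omega> \<in> space (M n). order_stat (\<lambda>i. FY (Y n i \<omega>)) n (k n) \<notin> {a<..<b}}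
      \<le> measure (M n) {\<omega> \<in> space (M n). order_stat (\<lambda>i. X n i \<omega>) n (k n) \<le> order_stat (\<lambda>i. Y n i \<omega>) n (k n)}"
      by (intro two_sample.prob_order_stat_le_lower_bound[OF samples k(1,2)[OF \<open>1 \<le> n\<close>] a(1) b(1) assms])
  qed
qed

lemma tendsto_prob_order_stat_le_half:
  assumes "\<And>u. a < u \<Longrightarrow> u < b \<Longrightarrow> quantile FX u = quantile FY u"
  shows "(\<lambda>n. measure (M n)
    {\<omega> \<in> space (M n). order_stat (\<lambda>i. X n i \<omega>) n (k n) \<le> order_stat (\<lambda>i. Y n i \<omega>) n (k n)}) \<longlonglongrightarrow> 1/2"
proof -
  define tail_X tail_Y where
    "tail_X n = measure (M n) {\<omega> \<in> space (M n). order_stat (\<lambda>i. FX (X n i \<omega>)) n (k n) \<notin> {a<..<b}}"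
    and "tail_Y n = measure (M n) {\<omega> \<in> space (M n). order_stat (\<lambda>i. FY (Y n i \<omega>)) n (k n) \<notin> {a<..<b}}"
    for n
  have "tail_Y \<longlonglongrightarrow> 0" unfolding tail_Y_def
    using two_sample.uniform_sample_FY[OF samples] k ratio a b by (rule tendsto_prob_order_stat_outside)
  have "tail_X \<longlonglongrightarrow> 0" unfolding tail_X_def
    using two_sample.uniform_sample_FY[OF two_sample.swap[OF samples]] k ratio a b
    by (rule tendsto_prob_order_stat_outside)
  have lower: "\<forall>\<^sub>F n in sequentially. 1/2 - tail_Y n \<le> measure (M n)
      {\<omega> \<in> space (M n). order_stat (\<lambda>i. X n i \<omega>) n (k n) \<le> order_stat (\<lambda>i. Y n i \<omega>) n (k n)}"
  proof (rule eventually_mono[OF eventually_ge_at_top[of 1]])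
    fix n :: nat assume "1 \<le> n"
    show "1/2 - tail_Y n \<le> measure (M n)
      {\<omega> \<in> space (M n). order_stat (\<lambda>i. X n i \<omega>) n (k n) \<le> order_stat (\<lambda>i. Y n i \<omega>) n (k n)}"
      unfolding tail_Y_def
      by (rule two_sample.prob_order_stat_le_lower_bound[OF samples k(1,2)[OF \<open>1 \<le> n\<close>] a(1) b(1)])
        (simp add: assms)
  qed
  have upper: "\<forall>\<^sub>F n in sequentially. measure (M n)
      {\<omega> \<in> space (M n). order_stat (\<lambda>i. X n i \<omega>) n (k n) \<le> order_stat (\<lambda>i. Y n i \<omega>) n (k n)}
      \<le> 1/2 + tail_X n"
  proof (rule eventually_mono[OF eventually_ge_at_top[of 1]])
    fix n :: nat assume "1 \<le> n"
    show "measure (M n)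
      {\<omega> \<in> space (M n). order_stat (\<lambda>i. X n i \<omega>) n (k n) \<le> order_stat (\<lambda>i. Y n i \<omega>) n (k n)}
      \<le> 1/2 + tail_X n"
      unfolding tail_X_def
      by (rule two_sample.prob_order_stat_le_upper_bound[OF samples k(1,2)[OF \<open>1 \<le> n\<close>] a(1) b(1)])
        (simp add: assms)
  qed
  have "(\<lambda>n. 1/2 - tail_Y n) \<longlonglongrightarrow> 1/2" "(\<lambda>n. 1/2 + tail_X n) \<longlonglongrightarrow> 1/2"
    using tendsto_diff[OF tendsto_const \<open>tail_Y \<longlonglongrightarrow> 0\<close>, of "1/2"]
      tendsto_add[OF tendsto_const \<open>tail_X \<longlonglongrightarrow> 0\<close>, of "1/2"] by simp_all
  then show ?thesis by (rule tendsto_sandwich[OF lower upper])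
qed

end

theorem theorem3p13:
  fixes M :: "nat \<Rightarrow> 'a measure"
    and X Y :: "nat \<Rightarrow> nat \<Rightarrow> 'a \<Rightarrow> real"
    and FX FY :: "real \<Rightarrow> real"
    and \<gamma>s :: "nat \<Rightarrow> real" and \<gamma> :: real
  assumes prob: "\<And>n. prob_space (M n)"
    and indep: "\<And>n. prob_space.indep_vars (M n) (\<lambda>_. borel)
                  (case_sum (X n) (Y n)) ({..<n} <+> {..<n})"
    and distX: "\<And>n i. i < n \<Longrightarrow> cdf (distr (M n) borel (X n i)) = FX"
    and distY: "\<And>n i. i < n \<Longrightarrow> cdf (distr (M n) borel (Y n i)) = FY"
    and contX: "continuous_on UNIV FX"
    and contY: "continuous_on UNIV FY"
    and \<gamma>s_range: "\<And>n. \<gamma>s n \<in> {0..1}"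
    and \<gamma>_range: "\<gamma> \<in> {0..1}"
    and rate: "(\<lambda>n. \<gamma>s n - \<gamma>) \<in> O(\<lambda>n. 1 / real n)"
  defines "P \<equiv> (\<lambda>n. measure (M n) {\<omega> \<in> space (M n).
              order_stat (\<lambda>i. X n i \<omega>) n (1 + nat \<lfloor>real (n - 1) * \<gamma>s n\<rfloor>) \<le> order_stat (\<lambda>i. Y n i \<omega>) n (1 + nat \<lfloor>real (n - 1) * \<gamma>s n\<rfloor>)})"
  shows "(dist_pos \<gamma> (A0 FX FY) \<longrightarrow> liminf (\<lambda>n. ereal (P n)) \<ge> ereal (1/2))
       \<and> (dist_pos \<gamma> (A2 FX FY) \<longrightarrow> P \<longlonglongrightarrow> 1/2)"
proof -
  define k where "k n = 1 + nat \<lfloor>real (n - 1) * \<gamma>s n\<rfloor>" for n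
  have samples: "two_sample (M n) (X n) (Y n) n FX FY" for n
    by (intro two_sample.intro two_sample_axioms.intro prob indep distX distY contX contY)
  have k: "1 \<le> k n" "k n \<le> n" if "1 \<le> n" for n
    using order_stat_index_bounds(1)[of "\<gamma>s n" n] \<gamma>s_range[of n] that by (simp_all add: k_def)
  have ratio: "(\<lambda>n. real (k n) / real n) \<longlonglongrightarrow> \<gamma>"
    unfolding k_def by (rule tendsto_order_stat_index_ratio[OF \<gamma>s_range tendsto_of_diff_bigo_inverse[OF rate]])
  have P: "P = (\<lambda>n. measure (M n) {\<omega> \<in> space (M n).
      order_stat (\<lambda>i. X n i \<omega>) n (k n) \<le> order_stat (\<lambda>i. Y n i \<omega>) n (k n)})"
    by (simp add: P_def k_def)
  show ?thesis
  proof (intro conjI impI)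
    assume "dist_pos \<gamma> (A0 FX FY)"
    then obtain a b where ab: "0 \<le> a" "a = 0 \<or> a < \<gamma>" "b \<le> 1" "b = 1 \<or> \<gamma> < b"
      and "{a<..<b} \<inter> A0 FX FY = {}"
      using \<gamma>_range by (rule dist_pos_obtains_interval)
    then have "quantile FX u \<le> quantile FY u" if "a < u" "u < b" for u
      using that by (fastforce simp: A0_def not_less)
    with samples k ratio ab show "ereal (1/2) \<le> liminf (\<lambda>n. ereal (P n))"
      unfolding P by (rule liminf_prob_order_stat_le_ge_half)
  next
    assume "dist_pos \<gamma> (A2 FX FY)"
    then obtain a b where ab: "0 \<le> a" "a = 0 \<or> a < \<gamma>" "b \<le> 1" "b = 1 \<or> \<gamma> < b"
      and "{a<..<b} \<inter> A2 FX FY = {}"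
      using \<gamma>_range by (rule dist_pos_obtains_interval)
    then have "quantile FX u = quantile FY u" if "a < u" "u < b" for u
      using that by (fastforce simp: A2_def)
    with samples k ratio ab show "P \<longlonglongrightarrow> 1/2"
      unfolding P by (rule tendsto_prob_order_stat_le_half)
  qed
qed

end
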